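(* Let $X=\{1,\ldots,n\}$, let $\mathcal{P}=\{X_1,\ldots,X_m\}$ be an $m$-partition of $X$, and let $f\in S(X,\mathcal{P})$. If $f$ is an $n$-cycle, then (i) $\chi^{(f)}$ is an $m$-cycle on $\{1,\ldots,m\}$, and (ii) $\mathcal{P}$ is a uniform partition of $X$.
   Context: Maps are written on the right. An $m$-partition is a partition with exactly $m$ blocks; a partition is uniform if all its blocks have the same size. An $r$-cycle on a set $Y$ is a permutation $(a_1,\ldots,a_r)$ of $Y$ with $a_if=a_{i+1}$ for $i<r$, $a_rf=a_1$ and fixing all other elements; an $n$-cycle on $X$ thus cyclically permutes all of $X$ (a $1$-cycle is the identity). $T(X,\mathcal{P})$ is the semigroup of maps $f\colon X\to X$ such that for every $i$ there is $j$ with $X_if\subseteq X_j$, and $S(X,\mathcal{P})$ is its group of units (bijections $f$ with $f,f^{-1}\in T(X,\mathcal{P})$). For $f\in T(X,\mathcal{P})$, $\chi^{(f)}\colon\{1,\ldots,m\}\to\{1,\ldots,m\}$ is defined by $i\chi^{(f)}=j$ whenever $X_if\subseteq X_j$. *)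

theory Defs
  imports Main
begin

definition is_m_partition :: "nat set \<Rightarrow> nat \<Rightarrow> (nat \<Rightarrow> nat set) \<Rightarrow> bool" where
  "is_m_partition X m Xp \<longleftrightarrow>
     (\<forall>i\<in>{1..m}. Xp i \<noteq> {} \<and> Xp i \<subseteq> X) \<and>
     (\<forall>i\<in>{1..m}. \<forall>j\<in>{1..m}. i \<noteq> j \<longrightarrow> Xp i \<inter> Xp j = {}) \<and>
     (\<Union>i\<in>{1..m}. Xp i) = X"

definition uniform_partition :: "nat \<Rightarrow> (nat \<Rightarrow> nat set) \<Rightarrow> bool" where
  "uniform_partition m Xp \<longleftrightarrow> (\<forall>i\<in>{1..m}. \<forall>j\<in>{1..m}. card (Xp i) = card (Xp j))"

definition in_T :: "nat set \<Rightarrow> nat \<Rightarrow> (nat \<Rightarrow> nat set) \<Rightarrow> (nat \<Rightarrow> nat) \<Rightarrow> bool" where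
  "in_T X m Xp f \<longleftrightarrow> f ` X \<subseteq> X \<and> (\<forall>i\<in>{1..m}. \<exists>j\<in>{1..m}. f ` Xp i \<subseteq> Xp j)"

definition in_S :: "nat set \<Rightarrow> nat \<Rightarrow> (nat \<Rightarrow> nat set) \<Rightarrow> (nat \<Rightarrow> nat) \<Rightarrow> bool" where
  "in_S X m Xp f \<longleftrightarrow> bij_betw f X X \<and> in_T X m Xp f \<and> in_T X m Xp (inv_into X f)"

definition chi :: "nat \<Rightarrow> (nat \<Rightarrow> nat set) \<Rightarrow> (nat \<Rightarrow> nat) \<Rightarrow> nat \<Rightarrow> nat" where
  "chi m Xp f i = (THE j. j \<in> {1..m} \<and> f ` Xp i \<subseteq> Xp j)"

definition is_cycle_on :: "'a set \<Rightarrow> 'a set \<Rightarrow> ('a \<Rightarrow> 'a) \<Rightarrow> bool" where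
  "is_cycle_on A Y g \<longleftrightarrow>
     (\<exists>as. distinct as \<and> set as = Y \<and>
        (\<forall>k < length as. g (as ! k) = as ! ((k + 1) mod length as))) \<and>
     (\<forall>x\<in>A - Y. g x = x)"

end

theory Submission
  imports Defs "HOL-Combinatorics.Cycles"
begin

text \<open>A point of the block \<open>X\<^sub>i\<close> is moved by \<open>f\<close> into \<open>X\<^bsub>i\<chi>\<^esub>\<close>, so the blocks met by
  the \<open>f\<close>-orbit of a point are traced by the \<open>\<chi>\<close>-orbit of its block. Since the \<open>n\<close>-cycle \<open>f\<close>
  has a single periodic orbit covering \<open>X\<close>, \<open>\<chi>\<close> has a single periodic orbit covering all
  \<open>m\<close> blocks, i.e. it is an \<open>m\<close>-cycle. Injectivity of \<open>f\<close> gives \<open>|X\<^sub>i| \<le> |X\<^bsub>i\<chi>\<^esub>|\<close>,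
  and going once around this cycle forces equality everywhere.\<close>

lemma funpow_cyclic_list_nth:
  assumes "\<forall>k < length as. g (as ! k) = as ! ((k + 1) mod length as)" and "i < length as"
  shows "(g ^^ k) (as ! i) = as ! ((i + k) mod length as)"
proof (induction k)
  case 0
  then show ?case using assms(2) by simp
next
  case (Suc k)
  have "0 < length as" using assms(2) by linarith
  then have "(i + k) mod length as < length as" by simp
  then show ?case using Suc assms(1) by (simp add: mod_Suc_eq)
qed

lemma is_cycle_on_orbit_eq:
  assumes "is_cycle_on A Y g" and "x \<in> Y"
  shows "range (\<lambda>k. (g ^^ k) x) = Y"
proof -
  obtain as where as: "set as = Y"
    and step: "\<forall>k < length as. g (as ! k) = as ! ((k + 1) mod length as)"
    using assms(1) unfolding is_cycle_on_def by blast
  obtain i where i: "i < length as" "x = as ! i"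
    using assms(2) as by (metis in_set_conv_nth)
  then have "0 < length as" by linarith
  have orbit: "(g ^^ k) x = as ! ((i + k) mod length as)" for k
    using funpow_cyclic_list_nth[OF step i(1)] i(2) by simp
  show ?thesis
  proof
    show "range (\<lambda>k. (g ^^ k) x) \<subseteq> Y"
      using orbit \<open>0 < length as\<close> as by auto
  next
    show "Y \<subseteq> range (\<lambda>k. (g ^^ k) x)"
    proof
      fix y assume "y \<in> Y"
      then obtain j where j: "j < length as" "y = as ! j"
        using as by (metis in_set_conv_nth)
      have "(i + (length as - i + j)) mod length as = j"
        using i(1) j(1) by simp
      then have "(g ^^ (length as - i + j)) x = y"
        using orbit j(2) by simp
      then show "y \<in> range (\<lambda>k. (g ^^ k) x)" by (metis rangeI)
    qed
  qed
qed

lemma is_cycle_on_funpow_card: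
  assumes "is_cycle_on A Y g" and "y \<in> Y"
  shows "(g ^^ card Y) y = y"
proof -
  obtain as where as: "distinct as" "set as = Y"
    and step: "\<forall>k < length as. g (as ! k) = as ! ((k + 1) mod length as)"
    using assms(1) unfolding is_cycle_on_def by blast
  obtain i where i: "i < length as" "y = as ! i"
    using assms(2) as(2) by (metis in_set_conv_nth)
  have "card Y = length as" using as distinct_card by blast
  then show ?thesis
    using funpow_cyclic_list_nth[OF step i(1), of "card Y"] i by simp
qed

lemma inj_on_funpow_least_power:
  assumes "(g ^^ N) x = x" "0 < N"
  shows "inj_on (\<lambda>k. (g ^^ k) x) {0..<least_power g x}"
proof (rule linorder_inj_onI')
  let ?p = "least_power g x"
  fix k l assume kl: "k \<in> {0..<?p}" "l \<in> {0..<?p}" "k < l"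
  have "(g ^^ (?p - l + l)) x = x" using kl least_powerI[OF assms] by simp
  then have returns: "(g ^^ (?p - l)) ((g ^^ l) x) = x" by (simp add: funpow_add)
  show "(g ^^ k) x \<noteq> (g ^^ l) x"
  proof
    assume "(g ^^ k) x = (g ^^ l) x"
    then have "(g ^^ (?p - l + k)) x = x" using returns by (simp add: funpow_add)
    then have "?p dvd ?p - l + k" by (rule least_power_minimal)
    moreover have "0 < ?p - l + k" "?p - l + k < ?p" using kl by auto
    ultimately show False using nat_dvd_not_less[of "?p - l + k" ?p] by simp
  qed
qed

lemma is_cycle_on_if_periodic_orbit:
  assumes periodic: "(g ^^ N) x = x" "0 < N" and orbit: "range (\<lambda>k. (g ^^ k) x) = A"
  shows "is_cycle_on A A g"
proof -
  define p where "p = least_power g x"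
  define bs where "bs = map (\<lambda>k. (g ^^ k) x) [0..<p]"
  have p: "(g ^^ p) x = x" "0 < p"
    using least_powerI[OF periodic] unfolding p_def by auto
  have mod_p: "(g ^^ k) x = (g ^^ (k mod p)) x" for k
    using funpow_mod_eq[OF p(1)] by simp
  have "set bs = A"
  proof
    show "set bs \<subseteq> A" unfolding bs_def using orbit by auto
  next
    show "A \<subseteq> set bs"
    proof
      fix y assume "y \<in> A"
      then obtain k where "y = (g ^^ k) x" using orbit by auto
      then have "y = (g ^^ (k mod p)) x" "k mod p \<in> {0..<p}" using mod_p[of k] p(2) by simp_all
      then show "y \<in> set bs" unfolding bs_def set_map set_upt by blast
    qed
  qed
  moreover have "distinct bs"
    unfolding bs_def p_def using inj_on_funpow_least_power[OF periodic] by (simp add: distinct_map)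
  moreover have "g (bs ! k) = bs ! ((k + 1) mod length bs)" if "k < length bs" for k
  proof -
    have "g (bs ! k) = (g ^^ Suc k) x"
      using that unfolding bs_def by simp
    also have "\<dots> = (g ^^ (Suc k mod p)) x"
      by (rule mod_p)
    also have "\<dots> = bs ! ((k + 1) mod length bs)"
      using p(2) unfolding bs_def by simp
    finally show ?thesis .
  qed
  ultimately show ?thesis unfolding is_cycle_on_def by blast
qed

lemma is_cycle_on_le_imp_eq:
  fixes h :: "'a \<Rightarrow> 'b::order"
  assumes cycle: "is_cycle_on A Y g" and le: "\<forall>y\<in>Y. h y \<le> h (g y)"
    and "x \<in> Y" "y \<in> Y"
  shows "h x = h y"
proof -
  have along_orbit: "h z \<le> h ((g ^^ k) z)" if "z \<in> Y" for z k
  proof (induction k)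
    case (Suc k)
    have "(g ^^ k) z \<in> Y" using is_cycle_on_orbit_eq[OF cycle \<open>z \<in> Y\<close>] by blast
    then show ?case using Suc le order_trans by fastforce
  qed simp
  obtain k l where "y = (g ^^ k) x" "x = (g ^^ l) y"
    using is_cycle_on_orbit_eq[OF cycle] \<open>x \<in> Y\<close> \<open>y \<in> Y\<close> by blast
  then have "h x \<le> h y" "h y \<le> h x"
    using along_orbit[OF \<open>x \<in> Y\<close>, of k] along_orbit[OF \<open>y \<in> Y\<close>, of l] by simp_all
  then show ?thesis by (rule order_antisym)
qed

lemma m_partition_block_eq:
  assumes "is_m_partition X m Xp" and "i \<in> {1..m}" "j \<in> {1..m}" "x \<in> Xp i" "x \<in> Xp j"
  shows "i = j"
  using assms unfolding is_m_partition_def by blast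

lemma chi_block:
  assumes partition: "is_m_partition X m Xp" and "in_T X m Xp f" and i: "i \<in> {1..m}"
  shows "chi m Xp f i \<in> {1..m}" and "f ` Xp i \<subseteq> Xp (chi m Xp f i)"
proof -
  obtain j where j: "j \<in> {1..m}" "f ` Xp i \<subseteq> Xp j"
    using assms(2) i unfolding in_T_def by blast
  obtain x where x: "x \<in> Xp i"
    using partition i unfolding is_m_partition_def by blast
  have "chi m Xp f i = j"
    unfolding chi_def
    using j x m_partition_block_eq[OF partition, of _ j "f x"] by blast
  then show "chi m Xp f i \<in> {1..m}" and "f ` Xp i \<subseteq> Xp (chi m Xp f i)"
    using j by simp_all
qed

lemma funpow_mem_block_funpow_chi:
  assumes "is_m_partition X m Xp" and "in_T X m Xp f" and "i \<in> {1..m}" "x \<in> Xp i"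
  shows "(chi m Xp f ^^ k) i \<in> {1..m}" and "(f ^^ k) x \<in> Xp ((chi m Xp f ^^ k) i)"
proof (induction k)
  case (Suc k)
  { case 1 show ?case using chi_block[OF assms(1,2) Suc.IH(1)] by simp }
  { case 2 show ?case using chi_block[OF assms(1,2) Suc.IH(1)] Suc.IH(2) by auto }
qed (use assms in simp_all)

lemma chi_is_cycle_on:
  assumes partition: "is_m_partition X m Xp" and T: "in_T X m Xp f"
    and cycle: "is_cycle_on A X f"
  shows "is_cycle_on {1..m} {1..m} (chi m Xp f)"
proof (cases "m = 0")
  case True
  then show ?thesis unfolding is_cycle_on_def by simp
next
  case False
  let ?c = "chi m Xp f"
  have blocks: "Xp i \<noteq> {}" "Xp i \<subseteq> X" if "i \<in> {1..m}" for i
    using partition that unfolding is_m_partition_def by auto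
  have one: "1 \<in> {1..m}" using False by simp
  obtain x0 where x0: "x0 \<in> Xp 1" using blocks(1)[OF one] by blast
  then have "x0 \<in> X" using blocks(2)[OF one] by blast
  note track = funpow_mem_block_funpow_chi[OF partition T one x0]
  have "range (\<lambda>k. (?c ^^ k) 1) \<subseteq> {1..m}" using track(1) by auto
  moreover have "{1..m} \<subseteq> range (\<lambda>k. (?c ^^ k) 1)"
  proof
    fix j assume j: "j \<in> {1..m}"
    then obtain y where y: "y \<in> Xp j" using blocks(1) by blast
    then obtain k where "(f ^^ k) x0 = y"
      using is_cycle_on_orbit_eq[OF cycle \<open>x0 \<in> X\<close>] blocks(2)[OF j] by blast
    then have "y \<in> Xp ((?c ^^ k) 1)" using track(2)[of k] by simp
    then have "j = (?c ^^ k) 1" by (rule m_partition_block_eq[OF partition j track(1) y])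
    then show "j \<in> range (\<lambda>k. (?c ^^ k) 1)" by simp
  qed
  ultimately have orbit: "range (\<lambda>k. (?c ^^ k) 1) = {1..m}" by (rule subset_antisym)
  have "finite X" using cycle unfolding is_cycle_on_def by (metis List.finite_set)
  then have "0 < card X" using \<open>x0 \<in> X\<close> card_gt_0_iff by blast
  moreover have "(?c ^^ card X) 1 = 1"
  proof (rule m_partition_block_eq[OF partition track(1) one _ x0])
    show "x0 \<in> Xp ((?c ^^ card X) 1)"
      using track(2)[of "card X"] is_cycle_on_funpow_card[OF cycle \<open>x0 \<in> X\<close>] by simp
  qed
  ultimately show ?thesis using is_cycle_on_if_periodic_orbit[OF _ _ orbit] by blast
qed

lemma card_block_le_card_chi:
  assumes partition: "is_m_partition X m Xp" and T: "in_T X m Xp f"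
    and "finite X" "inj_on f X" and i: "i \<in> {1..m}"
  shows "card (Xp i) \<le> card (Xp (chi m Xp f i))"
proof -
  have "Xp i \<subseteq> X" "Xp (chi m Xp f i) \<subseteq> X"
    using partition i chi_block(1)[OF partition T i] unfolding is_m_partition_def by auto
  then have "card (f ` Xp i) = card (Xp i)" "finite (Xp (chi m Xp f i))"
    using assms(3,4) inj_on_subset finite_subset by (metis card_image, metis)
  then show ?thesis using chi_block(2)[OF partition T i] card_mono by metis
qed

theorem proposition4p5:
  fixes n m :: nat and Xp :: "nat \<Rightarrow> nat set" and f :: "nat \<Rightarrow> nat"
  assumes "is_m_partition {1..n} m Xp"
    and "in_S {1..n} m Xp f"
    and "is_cycle_on {1..n} {1..n} f"
  shows "is_cycle_on {1..m} {1..m} (chi m Xp f) \<and> uniform_partition m Xp"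
proof
  have T: "in_T {1..n} m Xp f" using assms(2) unfolding in_S_def by blast
  have inj: "inj_on f {1..n}" using assms(2) unfolding in_S_def by (blast dest: bij_betw_imp_inj_on)
  show cycle: "is_cycle_on {1..m} {1..m} (chi m Xp f)"
    using chi_is_cycle_on[OF assms(1) T assms(3)] .
  have "\<forall>i\<in>{1..m}. card (Xp i) \<le> card (Xp (chi m Xp f i))"
    using card_block_le_card_chi[OF assms(1) T finite_atLeastAtMost inj] by blast
  then show "uniform_partition m Xp"
    unfolding uniform_partition_def
    using is_cycle_on_le_imp_eq[OF cycle, of "\<lambda>i. card (Xp i)"] by blast
qed

end
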